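(* For any integer $n\geq 2$ and positive numbers $V, L, \epsilon$, there is a universal constant $C>0$ such that $$\log\mathcal{N}(\mathcal{T}_{n,n,V,L},\epsilon) \leq C\log n\,\log\Big(1 + \frac{2Ln}{\epsilon}\Big)\max\Big\{\frac{V^2\log n}{\epsilon^2},1\Big\}.$$
   Context: $\mathcal{T}_{m,n,V,L} = \{\theta\in\mathbb{R}^{m\times n}: \mathrm{TV}(\theta)\le V,\ \|\theta\|_\infty\le L\}$, where $\mathrm{TV}(\theta)$ is the unnormalized total variation, i.e. the sum of $|\theta_u-\theta_v|$ over all pairs $u,v$ of horizontally or vertically adjacent entries, and $\|\theta\|_\infty$ is the maximum absolute entry. $\mathcal{N}(A,\epsilon)$ is the minimal number of Euclidean (Frobenius) balls of radius $\epsilon$ needed to cover $A$. *)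

theory Defs
  imports Complex_Main
begin

text \<open>An m x n real matrix is represented as a function on index pairs (i,j),
  i < m, j < n (0-based), which is zero outside the index range.\<close>

definition mat_space :: "nat \<Rightarrow> nat \<Rightarrow> (nat \<times> nat \<Rightarrow> real) set" where
  "mat_space m n = {\<theta>. \<forall>i j. \<not> (i < m \<and> j < n) \<longrightarrow> \<theta> (i, j) = 0}"

definition TV :: "nat \<Rightarrow> nat \<Rightarrow> (nat \<times> nat \<Rightarrow> real) \<Rightarrow> real" where
  "TV m n \<theta> =
     (\<Sum>i<m. \<Sum>j<n - 1. \<bar>\<theta> (i, Suc j) - \<theta> (i, j)\<bar>)
   + (\<Sum>i<m - 1. \<Sum>j<n. \<bar>\<theta> (Suc i, j) - \<theta> (i, j)\<bar>)"

definition sup_norm :: "nat \<Rightarrow> nat \<Rightarrow> (nat \<times> nat \<Rightarrow> real) \<Rightarrow> real" where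
  "sup_norm m n \<theta> = Max ({\<bar>\<theta> (i, j)\<bar> | i j. i < m \<and> j < n} \<union> {0})"

definition frob_dist :: "nat \<Rightarrow> nat \<Rightarrow> (nat \<times> nat \<Rightarrow> real) \<Rightarrow> (nat \<times> nat \<Rightarrow> real) \<Rightarrow> real" where
  "frob_dist m n a b = sqrt (\<Sum>i<m. \<Sum>j<n. (a (i, j) - b (i, j))\<^sup>2)"

definition TV_class :: "nat \<Rightarrow> nat \<Rightarrow> real \<Rightarrow> real \<Rightarrow> (nat \<times> nat \<Rightarrow> real) set" where
  "TV_class m n V L = {\<theta> \<in> mat_space m n. TV m n \<theta> \<le> V \<and> sup_norm m n \<theta> \<le> L}"

definition covering_number ::
  "nat \<Rightarrow> nat \<Rightarrow> (nat \<times> nat \<Rightarrow> real) set \<Rightarrow> real \<Rightarrow> nat" where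
  "covering_number m n A eps =
     (LEAST k. \<exists>K. finite K \<and> card K = k \<and> K \<subseteq> mat_space m n \<and>
                   (\<forall>\<theta>\<in>A. \<exists>c\<in>K. frob_dist m n \<theta> c \<le> eps))"

end

(* Approximate theta by a quadtree: split the n x n grid recursively into four quadrants,
   stopping at a rectangle as soon as its total variation is at most tau = eps^2 / (12 V), and
   after D = O(log n) levels at the latest, when the rectangles are single cells. Halving keeps
   all rectangles near-square, and on such a rectangle a discrete Poincare inequality bounds the
   squared error of a well-chosen constant by 3 TV^2 <= 3 tau TV; rounding the constant to the
   grid (eps / n) Z at most doubles this and adds eps^2 / (2 n^2) per cell. Summing, the squared
   error is at most 6 tau V + eps^2 / 2 = eps^2. Every split rectangle has TV > tau and
   rectangles at one depth are disjoint, so there are at most D V / tau = O(V^2 log n / eps^2)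
   splits. A quadtree is determined by its preorder code, a word of length 4 (#splits) + 1 over
   the O(L n / eps) grid values and one branching symbol; counting these words gives the bound. *)

theory Submission
  imports Defs "HOL-Library.Discrete_Functions"
begin

section \<open>Rectangles and their total variation\<close>

type_synonym mat = "nat \<times> nat \<Rightarrow> real"

text \<open>\<open>(a, h, c, w)\<close> is the block of rows \<open>a ..< a + h\<close> and columns \<open>c ..< c + w\<close>.\<close>

type_synonym rect = "nat \<times> nat \<times> nat \<times> nat"

fun cells :: "rect \<Rightarrow> (nat \<times> nat) set" where
  "cells (a, h, c, w) = {a..<a + h} \<times> {c..<c + w}"

definition variation :: "(nat \<Rightarrow> real) \<Rightarrow> nat \<Rightarrow> nat \<Rightarrow> real" where
  "variation f a h = (\<Sum>k\<in>{a..<a + h - 1}. \<bar>f (Suc k) - f k\<bar>)"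

fun rect_TV :: "mat \<Rightarrow> rect \<Rightarrow> real" where
  "rect_TV \<theta> (a, h, c, w) =
     (\<Sum>i\<in>{a..<a + h}. variation (\<lambda>j. \<theta> (i, j)) c w)
   + (\<Sum>j\<in>{c..<c + w}. variation (\<lambda>i. \<theta> (i, j)) a h)"

fun quad_nw :: "rect \<Rightarrow> rect" where
  "quad_nw (a, h, c, w) = (a, h div 2, c, w div 2)"
fun quad_ne :: "rect \<Rightarrow> rect" where
  "quad_ne (a, h, c, w) = (a, h div 2, c + w div 2, w - w div 2)"
fun quad_sw :: "rect \<Rightarrow> rect" where
  "quad_sw (a, h, c, w) = (a + h div 2, h - h div 2, c, w div 2)"
fun quad_se :: "rect \<Rightarrow> rect" where
  "quad_se (a, h, c, w) = (a + h div 2, h - h div 2, c + w div 2, w - w div 2)"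

lemma variation_nonneg: "0 \<le> variation f a h"
  unfolding variation_def by (simp add: sum_nonneg)

lemma rect_TV_nonneg: "0 \<le> rect_TV \<theta> R"
  by (cases R) (simp add: sum_nonneg variation_nonneg add_nonneg_nonneg)

lemma rect_TV_eq_0:
  assumes "h \<le> 1" "w \<le> 1"
  shows "rect_TV \<theta> (a, h, c, w) = 0"
  using assms by (simp add: variation_def)

lemma abs_diff_le_variation:
  assumes "j \<in> {a..<a + h}" "j' \<in> {a..<a + h}"
  shows "\<bar>f j - f j'\<bar> \<le> variation f a h"
proof -
  have "\<bar>f y - f x\<bar> \<le> variation f a h" if "a \<le> x" "x \<le> y" "y < a + h" for x y
  proof -
    have "\<bar>f y - f x\<bar> = \<bar>\<Sum>k\<in>{x..<y}. f (Suc k) - f k\<bar>"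
      using \<open>x \<le> y\<close> by (simp add: sum_Suc_diff')
    also have "\<dots> \<le> (\<Sum>k\<in>{x..<y}. \<bar>f (Suc k) - f k\<bar>)"
      by (rule sum_abs)
    also have "\<dots> \<le> variation f a h"
      unfolding variation_def using that by (intro sum_mono2) auto
    finally show ?thesis .
  qed
  then show ?thesis
    using assms by (metis abs_minus_commute atLeastLessThan_iff nle_le)
qed

lemma variation_split_le:
  "variation f a h1 + variation f (a + h1) h2 \<le> variation f a (h1 + h2)"
proof -
  have "variation f a h1 + variation f (a + h1) h2
      = (\<Sum>k\<in>{a..<a + h1 - 1} \<union> {a + h1..<a + h1 + h2 - 1}. \<bar>f (Suc k) - f k\<bar>)"
    unfolding variation_def by (subst sum.union_disjoint) auto
  also have "\<dots> \<le> variation f a (h1 + h2)"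
    unfolding variation_def by (intro sum_mono2) auto
  finally show ?thesis .
qed

lemma rect_TV_quadrants_le:
  "rect_TV \<theta> (quad_nw R) + rect_TV \<theta> (quad_ne R) + rect_TV \<theta> (quad_sw R) + rect_TV \<theta> (quad_se R)
     \<le> rect_TV \<theta> R"
proof -
  obtain a h c w where R: "R = (a, h, c, w)" by (cases R)
  have halves: "x + n div 2 + (n - n div 2) = x + n" for x n :: nat by simp
  have split: "sum g {x..<x + n} = sum g {x..<x + n div 2} + sum g {x + n div 2..<x + n}"
    for g :: "nat \<Rightarrow> real" and x n :: nat
    by (rule sum.atLeastLessThan_concat[symmetric]) auto
  have lines: "(\<Sum>i\<in>I. variation (g i) x (n div 2))
      + (\<Sum>i\<in>I. variation (g i) (x + n div 2) (n - n div 2)) \<le> (\<Sum>i\<in>I. variation (g i) x n)"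
    for I and g :: "nat \<Rightarrow> nat \<Rightarrow> real" and x n :: nat
    using variation_split_le[of _ x "n div 2" "n - n div 2"]
    by (simp only: sum.distrib[symmetric]) (intro sum_mono, simp)
  show ?thesis
    using lines[where I="{a..<a + h div 2}" and g="\<lambda>i j. \<theta> (i, j)" and x=c and n=w]
      lines[where I="{a + h div 2..<a + h}" and g="\<lambda>i j. \<theta> (i, j)" and x=c and n=w]
      lines[where I="{c..<c + w div 2}" and g="\<lambda>j i. \<theta> (i, j)" and x=a and n=h]
      lines[where I="{c + w div 2..<c + w}" and g="\<lambda>j i. \<theta> (i, j)" and x=a and n=h]
      split[of "\<lambda>i. variation (\<lambda>j. \<theta> (i, j)) c w" a h]
      split[of "\<lambda>j. variation (\<lambda>i. \<theta> (i, j)) a h" c w]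
    by (simp add: R halves)
qed

lemma finite_cells [simp]: "finite (cells R)"
  by (cases R) simp

lemma cells_quadrants:
  "cells R = cells (quad_nw R) \<union> cells (quad_ne R) \<union> cells (quad_sw R) \<union> cells (quad_se R)"
  by (cases R) auto

lemma quadrants_disjoint:
  "cells (quad_nw R) \<inter> cells (quad_ne R) = {}" "cells (quad_nw R) \<inter> cells (quad_sw R) = {}"
  "cells (quad_nw R) \<inter> cells (quad_se R) = {}" "cells (quad_ne R) \<inter> cells (quad_sw R) = {}"
  "cells (quad_ne R) \<inter> cells (quad_se R) = {}" "cells (quad_sw R) \<inter> cells (quad_se R) = {}"
  by (cases R; auto)+

lemma sum_cells_quadrants:
  "sum f (cells R) = sum f (cells (quad_nw R)) + sum f (cells (quad_ne R))
     + sum f (cells (quad_sw R)) + sum f (cells (quad_se R))"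
  by (subst cells_quadrants) (simp add: sum.union_disjoint Int_Un_distrib2 quadrants_disjoint)

lemma card_cells_quadrants:
  "card (cells R) = card (cells (quad_nw R)) + card (cells (quad_ne R))
     + card (cells (quad_sw R)) + card (cells (quad_se R))"
  using sum_cells_quadrants[of "\<lambda>_. 1 :: nat" R] by simp

section \<open>A discrete Poincare inequality\<close>

lemma ex_le_average:
  fixes f :: "'a \<Rightarrow> real"
  assumes "finite I" "I \<noteq> {}"
  shows "\<exists>i\<in>I. f i * card I \<le> sum f I"
proof -
  define i where "i = arg_min_on f I"
  have "i \<in> I" and i_min: "\<And>j. j \<in> I \<Longrightarrow> f i \<le> f j"
    using arg_min_if_finite[OF assms, of f] unfolding i_def by (auto simp: not_less)
  moreover have "card I * f i \<le> sum f I"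
    using i_min by (rule sum_bounded_below)
  ultimately show ?thesis
    by (auto simp: mult.commute)
qed

lemma sq_le_mult:
  fixes x P Q :: real
  assumes "\<bar>x\<bar> \<le> P" "\<bar>x\<bar> \<le> Q"
  shows "x\<^sup>2 \<le> P * Q"
proof -
  have "x\<^sup>2 = \<bar>x\<bar> * \<bar>x\<bar>"
    by (simp add: power2_eq_square)
  also have "\<dots> \<le> P * Q"
    using assms by (intro mult_mono) auto
  finally show ?thesis .
qed

text \<open>Pick a row \<open>i0\<close> and a column \<open>j0\<close> of at most average variation. Going from \<open>(i, j)\<close> to
  \<open>(i0, j0)\<close> along row \<open>i\<close> and column \<open>j0\<close>, or along column \<open>j\<close> and row \<open>i0\<close>, bounds
  \<open>\<bar>\<theta> (i, j) - \<theta> (i0, j0)\<bar>\<close> in two ways whose product factorises over \<open>i\<close> and \<open>j\<close>.\<close>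

lemma poincare_near_square:
  assumes "0 < h" "0 < w" "h \<le> 2 * w" "w \<le> 2 * h"
  shows "\<exists>p\<in>cells (a, h, c, w).
           (\<Sum>x\<in>cells (a, h, c, w). (\<theta> x - \<theta> p)\<^sup>2) \<le> 3 * (rect_TV \<theta> (a, h, c, w))\<^sup>2"
proof -
  define row where "row i = variation (\<lambda>j. \<theta> (i, j)) c w" for i
  define col where "col j = variation (\<lambda>i. \<theta> (i, j)) a h" for j
  define A where "A = (\<Sum>i\<in>{a..<a + h}. row i)"
  define B where "B = (\<Sum>j\<in>{c..<c + w}. col j)"
  have row_nn: "0 \<le> row i" and col_nn: "0 \<le> col j" for i j
    by (simp_all add: row_def col_def variation_nonneg)
  have A_nn: "0 \<le> A" and B_nn: "0 \<le> B"
    by (simp_all add: A_def B_def sum_nonneg row_nn col_nn)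
  have TV: "rect_TV \<theta> (a, h, c, w) = A + B"
    by (simp add: A_def B_def row_def col_def)
  obtain i0 where i0: "i0 \<in> {a..<a + h}" "row i0 * h \<le> A"
    using ex_le_average[of "{a..<a + h}" row] assms unfolding A_def by auto
  obtain j0 where j0: "j0 \<in> {c..<c + w}" "col j0 * w \<le> B"
    using ex_le_average[of "{c..<c + w}" col] assms unfolding B_def by auto
  have pointwise: "(\<theta> (i, j) - \<theta> (i0, j0))\<^sup>2 \<le> (row i + col j0) * (col j + row i0)"
    if "i \<in> {a..<a + h}" "j \<in> {c..<c + w}" for i j
  proof (rule sq_le_mult)
    show "\<bar>\<theta> (i, j) - \<theta> (i0, j0)\<bar> \<le> row i + col j0"
      using abs_diff_le_variation[of j c w j0 "\<lambda>j. \<theta> (i, j)"]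
        abs_diff_le_variation[of i a h i0 "\<lambda>i. \<theta> (i, j0)"] that i0 j0
      unfolding row_def col_def by linarith
    show "\<bar>\<theta> (i, j) - \<theta> (i0, j0)\<bar> \<le> col j + row i0"
      using abs_diff_le_variation[of i a h i0 "\<lambda>i. \<theta> (i, j)"]
        abs_diff_le_variation[of j c w j0 "\<lambda>j. \<theta> (i0, j)"] that i0 j0
      unfolding row_def col_def by linarith
  qed
  have "(\<Sum>x\<in>cells (a, h, c, w). (\<theta> x - \<theta> (i0, j0))\<^sup>2)
      = (\<Sum>i\<in>{a..<a + h}. \<Sum>j\<in>{c..<c + w}. (\<theta> (i, j) - \<theta> (i0, j0))\<^sup>2)"
    by (simp add: sum.cartesian_product)
  also have "\<dots> \<le> (\<Sum>i\<in>{a..<a + h}. \<Sum>j\<in>{c..<c + w}. (row i + col j0) * (col j + row i0))"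
    using pointwise by (intro sum_mono) auto
  also have "\<dots> = (A + h * col j0) * (B + w * row i0)"
    by (simp add: A_def B_def sum_product[symmetric] sum.distrib)
  also have "\<dots> \<le> (A + 2 * B) * (B + 2 * A)"
  proof -
    have "h * col j0 \<le> 2 * w * col j0"
      using assms col_nn by (intro mult_right_mono) auto
    then have "h * col j0 \<le> 2 * B"
      using j0(2) by (simp add: mult_ac)
    moreover have "w * row i0 \<le> 2 * h * row i0"
      using assms row_nn by (intro mult_right_mono) auto
    then have "w * row i0 \<le> 2 * A"
      using i0(2) by (simp add: mult_ac)
    ultimately show ?thesis
      using A_nn B_nn row_nn by (auto intro!: mult_mono)
  qed
  also have "\<dots> \<le> 3 * (A + B)\<^sup>2"
    using A_nn B_nn by (simp add: power2_eq_square algebra_simps add_nonneg_nonneg)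
  also have "\<dots> = 3 * (rect_TV \<theta> (a, h, c, w))\<^sup>2"
    unfolding TV ..
  finally show ?thesis
    using i0(1) j0(1) by (intro bexI[of _ "(i0, j0)"]) simp_all
qed

section \<open>Quadtrees\<close>

datatype quadtree = Leaf real | Node quadtree quadtree quadtree quadtree

fun qt_eval :: "quadtree \<Rightarrow> rect \<Rightarrow> mat" where
  "qt_eval (Leaf v) R p = (if p \<in> cells R then v else 0)"
| "qt_eval (Node t1 t2 t3 t4) R p =
     qt_eval t1 (quad_nw R) p + qt_eval t2 (quad_ne R) p
   + qt_eval t3 (quad_sw R) p + qt_eval t4 (quad_se R) p"

lemma qt_eval_outside: "p \<notin> cells R \<Longrightarrow> qt_eval t R p = 0"
proof (induction t arbitrary: R)
  case (Node t1 t2 t3 t4)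
  then show ?case
    using cells_quadrants[of R] by simp
qed simp

lemma qt_eval_Node_quadrant:
  "p \<in> cells (quad_nw R) \<Longrightarrow> qt_eval (Node t1 t2 t3 t4) R p = qt_eval t1 (quad_nw R) p"
  "p \<in> cells (quad_ne R) \<Longrightarrow> qt_eval (Node t1 t2 t3 t4) R p = qt_eval t2 (quad_ne R) p"
  "p \<in> cells (quad_sw R) \<Longrightarrow> qt_eval (Node t1 t2 t3 t4) R p = qt_eval t3 (quad_sw R) p"
  "p \<in> cells (quad_se R) \<Longrightarrow> qt_eval (Node t1 t2 t3 t4) R p = qt_eval t4 (quad_se R) p"
  by (cases R; auto simp: qt_eval_outside)+

definition sq_err :: "mat \<Rightarrow> quadtree \<Rightarrow> rect \<Rightarrow> real" where
  "sq_err \<theta> t R = (\<Sum>p\<in>cells R. (\<theta> p - qt_eval t R p)\<^sup>2)"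

lemma sq_err_Node:
  "sq_err \<theta> (Node t1 t2 t3 t4) R
     = sq_err \<theta> t1 (quad_nw R) + sq_err \<theta> t2 (quad_ne R)
     + sq_err \<theta> t3 (quad_sw R) + sq_err \<theta> t4 (quad_se R)"
  unfolding sq_err_def sum_cells_quadrants[of _ R]
  by (simp add: qt_eval_Node_quadrant del: qt_eval.simps)

section \<open>Greedy quadtree approximation\<close>

definition quantize :: "real \<Rightarrow> real \<Rightarrow> real" where
  "quantize \<delta> y = \<delta> * of_int (round (y / \<delta>))"

definition grid :: "real \<Rightarrow> real \<Rightarrow> real set" where
  "grid \<delta> L = (\<lambda>z. \<delta> * of_int z) ` {-(\<lceil>L / \<delta>\<rceil> + 1)..\<lceil>L / \<delta>\<rceil> + 1}"

lemma abs_quantize_diff_le: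
  assumes "\<delta> > 0"
  shows "\<bar>y - quantize \<delta> y\<bar> \<le> \<delta> / 2"
proof -
  have "\<bar>y - quantize \<delta> y\<bar> = \<delta> * \<bar>of_int (round (y / \<delta>)) - y / \<delta>\<bar>"
    using assms by (simp add: quantize_def abs_mult_pos' field_simps abs_minus_commute)
  also have "\<dots> \<le> \<delta> * (1 / 2)"
    using assms of_int_round_abs_le[of "y / \<delta>"] by (intro mult_left_mono) auto
  finally show ?thesis
    by simp
qed

lemma quantize_in_grid:
  assumes "\<delta> > 0" "\<bar>y\<bar> \<le> L"
  shows "quantize \<delta> y \<in> grid \<delta> L"
proof -
  have "\<bar>y / \<delta>\<bar> \<le> L / \<delta>"
    using assms by (simp add: abs_divide divide_right_mono)
  then have "\<bar>of_int (round (y / \<delta>))\<bar> \<le> L / \<delta> + 1"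
    using of_int_round_abs_le[of "y / \<delta>"] by linarith
  then have "\<bar>round (y / \<delta>)\<bar> \<le> \<lceil>L / \<delta>\<rceil> + 1"
    using le_of_int_ceiling[of "L / \<delta>"] by linarith
  then show ?thesis
    unfolding quantize_def grid_def by (intro imageI) auto
qed

lemma card_grid_le:
  assumes "\<delta> > 0" "L \<ge> 0"
  shows "real (card (grid \<delta> L)) \<le> 2 * (L / \<delta>) + 5"
proof -
  have "card (grid \<delta> L) \<le> card {-(\<lceil>L / \<delta>\<rceil> + 1)..\<lceil>L / \<delta>\<rceil> + 1}"
    unfolding grid_def by (rule card_image_le) simp
  moreover have "real_of_int \<lceil>L / \<delta>\<rceil> \<le> L / \<delta> + 1" "0 \<le> L / \<delta>"
    using assms by (simp_all add: of_int_ceiling_le_add_one)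
  ultimately show ?thesis
    by simp linarith
qed

text \<open>Any cell satisfying the Poincare bound: one exists on every non-empty near-square
  rectangle, elsewhere the choice is arbitrary.\<close>

definition anchor :: "mat \<Rightarrow> rect \<Rightarrow> nat \<times> nat" where
  "anchor \<theta> R = (SOME p. p \<in> cells R \<and> (\<Sum>x\<in>cells R. (\<theta> x - \<theta> p)\<^sup>2) \<le> 3 * (rect_TV \<theta> R)\<^sup>2)"

definition anchor_leaf :: "real \<Rightarrow> mat \<Rightarrow> rect \<Rightarrow> quadtree" where
  "anchor_leaf \<delta> \<theta> R = Leaf (quantize \<delta> (\<theta> (anchor \<theta> R)))"

text \<open>Halving preserves \<open>balanced\<close>, and balanced non-empty rectangles have aspect ratio at
  most 2, as \<open>poincare_near_square\<close> requires.\<close>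

fun balanced :: "nat \<Rightarrow> rect \<Rightarrow> bool" where
  "balanced q (a, h, c, w) \<longleftrightarrow> h \<in> {q, Suc q} \<and> w \<in> {q, Suc q}"

lemma balanced_quadrants:
  assumes "balanced q R"
  shows "balanced (q div 2) (quad_nw R)" "balanced (q div 2) (quad_ne R)"
    "balanced (q div 2) (quad_sw R)" "balanced (q div 2) (quad_se R)"
  using assms by (cases R; auto)+

lemma sq_err_anchor_leaf_le:
  assumes "balanced q R" "\<delta> > 0"
  shows "sq_err \<theta> (anchor_leaf \<delta> \<theta> R) R \<le> 6 * (rect_TV \<theta> R)\<^sup>2 + \<delta>\<^sup>2 / 2 * card (cells R)"
proof (cases "cells R = {}")
  case True
  then show ?thesis
    by (simp add: sq_err_def)
next
  case False
  obtain a h c w where R: "R = (a, h, c, w)"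
    by (cases R)
  have shape: "0 < h" "0 < w" "h \<le> 2 * w" "w \<le> 2 * h"
    using False assms(1) unfolding R by auto
  have "\<exists>p. p \<in> cells R \<and> (\<Sum>x\<in>cells R. (\<theta> x - \<theta> p)\<^sup>2) \<le> 3 * (rect_TV \<theta> R)\<^sup>2"
    using poincare_near_square[OF shape, of a c \<theta>] unfolding R by blast
  then have anchor: "(\<Sum>x\<in>cells R. (\<theta> x - \<theta> (anchor \<theta> R))\<^sup>2) \<le> 3 * (rect_TV \<theta> R)\<^sup>2"
    unfolding anchor_def by (rule someI2_ex) simp
  define v where "v = quantize \<delta> (\<theta> (anchor \<theta> R))"
  have v: "(\<theta> (anchor \<theta> R) - v)\<^sup>2 \<le> \<delta>\<^sup>2 / 4"
    using sq_le_mult[OF abs_quantize_diff_le abs_quantize_diff_le] assms(2)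
    unfolding v_def by (simp add: power2_eq_square)
  have "sq_err \<theta> (anchor_leaf \<delta> \<theta> R) R = (\<Sum>x\<in>cells R. (\<theta> x - v)\<^sup>2)"
    unfolding sq_err_def anchor_leaf_def v_def by simp
  also have "\<dots> \<le> (\<Sum>x\<in>cells R. 2 * (\<theta> x - \<theta> (anchor \<theta> R))\<^sup>2 + \<delta>\<^sup>2 / 2)"
  proof (rule sum_mono)
    fix x
    have "(\<theta> x - v)\<^sup>2 \<le> 2 * (\<theta> x - \<theta> (anchor \<theta> R))\<^sup>2 + 2 * (\<theta> (anchor \<theta> R) - v)\<^sup>2"
      using sum_squares_ge_zero[of "\<theta> x - \<theta> (anchor \<theta> R) - (\<theta> (anchor \<theta> R) - v)" 0]
      by (simp add: power2_eq_square algebra_simps)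
    then show "(\<theta> x - v)\<^sup>2 \<le> 2 * (\<theta> x - \<theta> (anchor \<theta> R))\<^sup>2 + \<delta>\<^sup>2 / 2"
      using v by linarith
  qed
  also have "\<dots> \<le> 6 * (rect_TV \<theta> R)\<^sup>2 + \<delta>\<^sup>2 / 2 * card (cells R)"
    using anchor by (simp add: sum.distrib sum_distrib_left[symmetric] mult.commute)
  finally show ?thesis .
qed

fun greedy_qt :: "real \<Rightarrow> real \<Rightarrow> mat \<Rightarrow> nat \<Rightarrow> rect \<Rightarrow> quadtree" where
  "greedy_qt \<tau> \<delta> \<theta> 0 R = anchor_leaf \<delta> \<theta> R"
| "greedy_qt \<tau> \<delta> \<theta> (Suc k) R =
     (if rect_TV \<theta> R \<le> \<tau> then anchor_leaf \<delta> \<theta> R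
      else Node (greedy_qt \<tau> \<delta> \<theta> k (quad_nw R)) (greedy_qt \<tau> \<delta> \<theta> k (quad_ne R))
                (greedy_qt \<tau> \<delta> \<theta> k (quad_sw R)) (greedy_qt \<tau> \<delta> \<theta> k (quad_se R)))"

fun internal_nodes :: "quadtree \<Rightarrow> nat" where
  "internal_nodes (Leaf v) = 0"
| "internal_nodes (Node t1 t2 t3 t4) =
     Suc (internal_nodes t1 + internal_nodes t2 + internal_nodes t3 + internal_nodes t4)"

fun leaf_values :: "quadtree \<Rightarrow> real set" where
  "leaf_values (Leaf v) = {v}"
| "leaf_values (Node t1 t2 t3 t4) = leaf_values t1 \<union> leaf_values t2 \<union> leaf_values t3 \<union> leaf_values t4"

lemma internal_nodes_greedy_qt_le:
  assumes "\<tau> > 0"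
  shows "real (internal_nodes (greedy_qt \<tau> \<delta> \<theta> k R)) * \<tau> \<le> k * rect_TV \<theta> R"
proof (induction k arbitrary: R)
  case 0
  then show ?case
    by (simp add: anchor_leaf_def)
next
  case (Suc k)
  show ?case
  proof (cases "rect_TV \<theta> R \<le> \<tau>")
    case True
    then show ?thesis
      by (simp add: anchor_leaf_def rect_TV_nonneg)
  next
    case False
    let ?n = "\<lambda>R'. real (internal_nodes (greedy_qt \<tau> \<delta> \<theta> k R'))"
    have "real (internal_nodes (greedy_qt \<tau> \<delta> \<theta> (Suc k) R)) * \<tau>
        = \<tau> + ?n (quad_nw R) * \<tau> + ?n (quad_ne R) * \<tau> + ?n (quad_sw R) * \<tau> + ?n (quad_se R) * \<tau>"
      using False by (simp add: algebra_simps)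
    also have "\<dots> \<le> rect_TV \<theta> R + k * (rect_TV \<theta> (quad_nw R) + rect_TV \<theta> (quad_ne R)
                                       + rect_TV \<theta> (quad_sw R) + rect_TV \<theta> (quad_se R))"
      using False Suc.IH[of "quad_nw R"] Suc.IH[of "quad_ne R"] Suc.IH[of "quad_sw R"]
        Suc.IH[of "quad_se R"] by (simp add: algebra_simps)
    also have "\<dots> \<le> rect_TV \<theta> R + k * rect_TV \<theta> R"
      using rect_TV_quadrants_le[of \<theta> R] by (simp add: mult_left_mono)
    finally show ?thesis
      by (simp add: algebra_simps)
  qed
qed

lemma sq_err_greedy_qt_le:
  assumes "\<tau> > 0" "\<delta> > 0" "balanced q R" "q < 2 ^ k"
  shows "sq_err \<theta> (greedy_qt \<tau> \<delta> \<theta> k R) R \<le> 6 * \<tau> * rect_TV \<theta> R + \<delta>\<^sup>2 / 2 * card (cells R)"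
  using assms(3,4)
proof (induction k arbitrary: q R)
  case 0
  obtain a h c w where R: "R = (a, h, c, w)"
    by (cases R)
  have "rect_TV \<theta> R = 0"
    using 0 unfolding R by (intro rect_TV_eq_0) auto
  then show ?case
    using sq_err_anchor_leaf_le[OF "0.prems"(1) assms(2), of \<theta>] by simp
next
  case (Suc k)
  show ?case
  proof (cases "rect_TV \<theta> R \<le> \<tau>")
    case True
    then have "6 * (rect_TV \<theta> R)\<^sup>2 \<le> 6 * \<tau> * rect_TV \<theta> R"
      using rect_TV_nonneg[of \<theta> R] by (simp add: power2_eq_square mult_right_mono)
    then show ?thesis
      using True sq_err_anchor_leaf_le[OF Suc.prems(1) assms(2), of \<theta>] by simp
  next
    case False
    have q: "q div 2 < 2 ^ k"
      using Suc.prems(2) by simp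
    let ?e = "\<lambda>R'. 6 * \<tau> * rect_TV \<theta> R' + \<delta>\<^sup>2 / 2 * card (cells R')"
    have "sq_err \<theta> (greedy_qt \<tau> \<delta> \<theta> (Suc k) R) R
        \<le> ?e (quad_nw R) + ?e (quad_ne R) + ?e (quad_sw R) + ?e (quad_se R)"
      using False Suc.IH[OF balanced_quadrants(1)[OF Suc.prems(1)] q]
        Suc.IH[OF balanced_quadrants(2)[OF Suc.prems(1)] q]
        Suc.IH[OF balanced_quadrants(3)[OF Suc.prems(1)] q]
        Suc.IH[OF balanced_quadrants(4)[OF Suc.prems(1)] q]
      by (simp add: sq_err_Node)
    also have "\<dots> = 6 * \<tau> * (rect_TV \<theta> (quad_nw R) + rect_TV \<theta> (quad_ne R)
                              + rect_TV \<theta> (quad_sw R) + rect_TV \<theta> (quad_se R))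
                     + \<delta>\<^sup>2 / 2 * card (cells R)"
      by (simp add: card_cells_quadrants[of R] algebra_simps)
    also have "\<dots> \<le> ?e R"
      using rect_TV_quadrants_le[of \<theta> R] assms(1) by simp
    finally show ?thesis .
  qed
qed

lemma leaf_values_greedy_qt_subset:
  assumes "\<delta> > 0" "\<And>p. \<bar>\<theta> p\<bar> \<le> L"
  shows "leaf_values (greedy_qt \<tau> \<delta> \<theta> k R) \<subseteq> grid \<delta> L"
  by (induction k arbitrary: R) (simp_all add: anchor_leaf_def quantize_in_grid assms)

section \<open>Counting quadtrees and the covering bound\<close>

fun qt_code :: "quadtree \<Rightarrow> real option list" where
  "qt_code (Leaf v) = [Some v]"
| "qt_code (Node t1 t2 t3 t4) = None # qt_code t1 @ qt_code t2 @ qt_code t3 @ qt_code t4"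

lemma qt_code_prefix_free: "qt_code t @ xs = qt_code t' @ ys \<Longrightarrow> t = t' \<and> xs = ys"
proof (induction t arbitrary: t' xs ys)
  case (Leaf v)
  then show ?case
    by (cases t') auto
next
  case (Node t1 t2 t3 t4)
  show ?case
  proof (cases t')
    case (Leaf w)
    then show ?thesis
      using Node.prems by simp
  next
    case (Node u1 u2 u3 u4)
    then have "qt_code t1 @ (qt_code t2 @ qt_code t3 @ qt_code t4 @ xs)
             = qt_code u1 @ (qt_code u2 @ qt_code u3 @ qt_code u4 @ ys)"
      using Node.prems by simp
    then show ?thesis
      using Node Node.IH by (metis append.assoc)
  qed
qed

lemma inj_qt_code: "inj qt_code"
  using qt_code_prefix_free[where xs = "[]" and ys = "[]"] by (auto intro: injI)

lemma length_qt_code: "length (qt_code t) = 4 * internal_nodes t + 1"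
  by (induction t) auto

lemma set_qt_code: "set (qt_code t) \<subseteq> insert None (Some ` leaf_values t)"
  by (induction t) auto

lemma sum_power_le_Suc_power:
  fixes a :: nat
  shows "(\<Sum>i\<le>m. a ^ i) \<le> (a + 1) ^ m"
proof (induction m)
  case (Suc m)
  have "(\<Sum>i\<le>Suc m. a ^ i) = 1 + a * (\<Sum>i\<le>m. a ^ i)"
    unfolding sum.atMost_Suc_shift by (simp add: sum_distrib_left)
  also have "\<dots> \<le> 1 + a * (a + 1) ^ m"
    using Suc.IH by simp
  also have "\<dots> \<le> (a + 1) ^ Suc m"
    by (simp add: algebra_simps)
  finally show ?case .
qed simp

lemma card_quadtrees_le:
  assumes "finite G"
  shows "finite {t. internal_nodes t \<le> S \<and> leaf_values t \<subseteq> G}"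
    and "card {t. internal_nodes t \<le> S \<and> leaf_values t \<subseteq> G} \<le> (card G + 2) ^ (4 * S + 1)"
proof -
  define T where "T = {t. internal_nodes t \<le> S \<and> leaf_values t \<subseteq> G}"
  define A where "A = insert None (Some ` G)"
  define codes where "codes = {xs. set xs \<subseteq> A \<and> length xs \<le> 4 * S + 1}"
  have "finite A" and card_A: "card A + 1 = card G + 2"
    using assms by (simp_all add: A_def card_image)
  have "qt_code ` T \<subseteq> codes"
    using set_qt_code length_qt_code unfolding T_def codes_def A_def by fastforce
  moreover have "finite codes"
    unfolding codes_def using \<open>finite A\<close> by (rule finite_lists_length_le)
  moreover have inj: "inj_on qt_code T"
    using inj_qt_code by (rule inj_on_subset) simp
  ultimately show "finite T"
    by (metis finite_imageD finite_subset)
  have "card T \<le> card codes"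
    using card_inj_on_le[OF inj \<open>qt_code ` T \<subseteq> codes\<close> \<open>finite codes\<close>] .
  also have "\<dots> = (\<Sum>i\<le>4 * S + 1. card A ^ i)"
    unfolding codes_def by (rule card_lists_length_le[OF \<open>finite A\<close>])
  also have "\<dots> \<le> (card G + 2) ^ (4 * S + 1)"
    using sum_power_le_Suc_power[of "card A"] by (simp only: card_A)
  finally show "card T \<le> (card G + 2) ^ (4 * S + 1)" .
qed

lemma TV_eq_rect_TV: "TV m n \<theta> = rect_TV \<theta> (0, m, 0, n)"
  unfolding TV_def by (simp add: variation_def atLeast0LessThan) (rule sum.swap)

lemma frob_dist_qt_eval: "frob_dist m n \<theta> (qt_eval t (0, m, 0, n)) = sqrt (sq_err \<theta> t (0, m, 0, n))"
  unfolding frob_dist_def sq_err_def by (simp add: sum.cartesian_product atLeast0LessThan)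

lemma qt_eval_in_mat_space: "qt_eval t (0, m, 0, n) \<in> mat_space m n"
  unfolding mat_space_def by (auto intro!: qt_eval_outside)

lemma abs_le_of_TV_class:
  assumes "\<theta> \<in> TV_class m n V L"
  shows "\<bar>\<theta> p\<bar> \<le> L"
proof -
  obtain i j where p: "p = (i, j)"
    by (cases p)
  have "finite ({\<bar>\<theta> (i, j)\<bar> | i j. i < m \<and> j < n} \<union> {0})"
    using finite_image_set2[of "\<lambda>i. i < m" "\<lambda>j. j < n" "\<lambda>i j. \<bar>\<theta> (i, j)\<bar>"] by simp
  then have "\<bar>\<theta> (i, j)\<bar> \<le> sup_norm m n \<theta>" if "i < m \<and> j < n \<or> \<theta> (i, j) = 0"
    unfolding sup_norm_def using that by (intro Max_ge) auto
  moreover have "i < m \<and> j < n \<or> \<theta> (i, j) = 0"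
    using assms by (auto simp: TV_class_def mat_space_def)
  ultimately show ?thesis
    using assms p by (force simp: TV_class_def)
qed

lemma covering_number_le_card:
  assumes "finite K" "K \<subseteq> mat_space m n" "\<forall>\<theta>\<in>A. \<exists>c\<in>K. frob_dist m n \<theta> c \<le> eps"
  shows "covering_number m n A eps \<le> card K"
  unfolding covering_number_def using assms by (intro Least_le) blast

lemma covering_number_TV_class_le_1:
  assumes "L * sqrt (real m * real n) \<le> eps"
  shows "covering_number m n (TV_class m n V L) eps \<le> 1"
proof -
  have "frob_dist m n \<theta> (\<lambda>_. 0) \<le> eps" if "\<theta> \<in> TV_class m n V L" for \<theta>
  proof -
    have "frob_dist m n \<theta> (\<lambda>_. 0) \<le> sqrt (\<Sum>i<m. \<Sum>j<n. L * L)"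
      unfolding frob_dist_def using abs_le_of_TV_class[OF that]
      by (intro real_sqrt_le_mono sum_mono sq_le_mult) auto
    also have "\<dots> = L * sqrt (real m * real n)"
      using abs_le_of_TV_class[OF that, of "(0, 0)"] by (simp add: real_sqrt_mult)
    finally show ?thesis
      using assms by linarith
  qed
  then have "covering_number m n (TV_class m n V L) eps \<le> card {\<lambda>_ :: nat \<times> nat. 0 :: real}"
    by (intro covering_number_le_card) (auto simp: mat_space_def)
  then show ?thesis
    by simp
qed

lemma covering_number_TV_class_le:
  fixes \<tau> \<delta> :: real
  assumes "\<tau> > 0" "\<delta> > 0" "eps \<ge> 0" "n < 2 ^ D" "6 * \<tau> * V + \<delta>\<^sup>2 / 2 * (real n)\<^sup>2 \<le> eps\<^sup>2"
  shows "covering_number n n (TV_class n n V L) eps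
           \<le> (card (grid \<delta> L) + 2) ^ (4 * nat \<lfloor>D * V / \<tau>\<rfloor> + 1)"
proof -
  define S where "S = nat \<lfloor>D * V / \<tau>\<rfloor>"
  define T where "T = {t. internal_nodes t \<le> S \<and> leaf_values t \<subseteq> grid \<delta> L}"
  define K where "K = (\<lambda>t. qt_eval t (0, n, 0, n)) ` T"
  have "finite (grid \<delta> L)"
    by (simp add: grid_def)
  note T = card_quadtrees_le[OF this, of S, folded T_def]
  have "\<exists>c\<in>K. frob_dist n n \<theta> c \<le> eps" if \<theta>: "\<theta> \<in> TV_class n n V L" for \<theta>
  proof -
    define t where "t = greedy_qt \<tau> \<delta> \<theta> D (0, n, 0, n)"
    have TV: "rect_TV \<theta> (0, n, 0, n) \<le> V"
      using \<theta> by (simp add: TV_class_def TV_eq_rect_TV)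
    have "sq_err \<theta> t (0, n, 0, n) \<le> 6 * \<tau> * rect_TV \<theta> (0, n, 0, n) + \<delta>\<^sup>2 / 2 * (real n)\<^sup>2"
      using sq_err_greedy_qt_le[OF assms(1,2), of n "(0, n, 0, n)" D \<theta>] assms(4)
      by (simp add: t_def power2_eq_square)
    also have "\<dots> \<le> eps\<^sup>2"
      using mult_left_mono[OF TV, of "6 * \<tau>"] assms(1,5) by linarith
    finally have "sqrt (sq_err \<theta> t (0, n, 0, n)) \<le> sqrt (eps\<^sup>2)"
      by (rule real_sqrt_le_mono)
    then have "frob_dist n n \<theta> (qt_eval t (0, n, 0, n)) \<le> eps"
      unfolding frob_dist_qt_eval using assms(3) by simp
    moreover have "real (internal_nodes t) * \<tau> \<le> D * V"
      using internal_nodes_greedy_qt_le[OF assms(1), of \<delta> \<theta> D "(0, n, 0, n)"]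
        mult_left_mono[OF TV, of D] unfolding t_def by linarith
    then have "internal_nodes t \<le> S"
      unfolding S_def using assms(1) by (intro le_nat_floor) (simp add: field_simps)
    moreover have "leaf_values t \<subseteq> grid \<delta> L"
      unfolding t_def using assms(2) abs_le_of_TV_class[OF \<theta>] by (rule leaf_values_greedy_qt_subset)
    ultimately show ?thesis
      unfolding K_def T_def by blast
  qed
  then have "covering_number n n (TV_class n n V L) eps \<le> card K"
    using T(1) by (intro covering_number_le_card) (auto simp: K_def qt_eval_in_mat_space)
  also have "\<dots> \<le> card T"
    unfolding K_def using T(1) by (rule card_image_le)
  also have "\<dots> \<le> (card (grid \<delta> L) + 2) ^ (4 * S + 1)"
    by (rule T(2))
  finally show ?thesis
    unfolding S_def .
qed

section \<open>Choice of parameters\<close>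

lemma ln_2_ge_half: "1 / 2 \<le> ln (2 :: real)"
proof -
  have "exp 1 \<le> (4 :: real)"
    using exp_le by simp
  then have "1 \<le> ln (4 :: real)"
    by (simp add: ln_ge_iff)
  also have "ln (4 :: real) = 2 * ln 2"
    using ln_mult[of 2 2] by simp
  finally show ?thesis
    by simp
qed

lemma exponent_le_4_ln:
  assumes "n \<ge> 2" "2 ^ D \<le> 2 * n"
  shows "real D \<le> 4 * ln (real n)"
proof -
  have "real D * ln 2 = ln (2 ^ D)"
    by (simp add: ln_realpow)
  also have "\<dots> \<le> ln (2 * real n)"
  proof -
    have "(2 :: real) ^ D \<le> 2 * real n"
      using assms(2) by (metis of_nat_le_iff of_nat_mult of_nat_numeral of_nat_power)
    then show ?thesis
      using assms(1) by simp
  qed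
  also have "\<dots> \<le> 2 * ln (real n)"
    using assms(1) by (simp add: ln_mult)
  finally show ?thesis
    using mult_left_mono[OF ln_2_ge_half, of "real D"] by linarith
qed

lemma ln_of_nat_le_ln:
  assumes "m \<le> k" "0 < k"
  shows "ln (real m) \<le> ln (real k)"
  using assms by (cases "m = 0") auto

lemma code_length_le:
  fixes n D :: nat and V eps :: real
  assumes n: "n \<ge> 2" and "2 ^ D \<le> 2 * n" "V > 0" "eps > 0"
  shows "real (4 * nat \<lfloor>D * V / (eps\<^sup>2 / (12 * V))\<rfloor> + 1) \<le> 193 * max (V\<^sup>2 * ln n / eps\<^sup>2) 1"
proof -
  have "real (nat \<lfloor>D * V / (eps\<^sup>2 / (12 * V))\<rfloor>) \<le> D * V / (eps\<^sup>2 / (12 * V))"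
    using assms by simp
  also have "\<dots> = 12 * D * V\<^sup>2 / eps\<^sup>2"
    using assms by (simp add: power2_eq_square)
  also have "\<dots> \<le> 48 * (V\<^sup>2 * ln n / eps\<^sup>2)"
    using mult_right_mono[OF exponent_le_4_ln[OF assms(1,2)], of "12 * V\<^sup>2 / eps\<^sup>2"]
    by (simp add: mult_ac)
  finally show ?thesis
    by auto
qed

lemma ln_card_grid_le:
  fixes n :: nat and L eps :: real
  assumes "eps > 0" "eps < L * n"
  shows "ln (real (card (grid (eps / n) L) + 2)) \<le> 3 * ln (1 + 2 * L * n / eps)"
proof -
  define x where "x = 1 + 2 * L * n / eps"
  have "0 < L * n"
    using assms by linarith
  then have "n > 0" "L > 0"
    by (simp_all add: zero_less_mult_iff)
  have ratio: "L * n / eps > 1" "x = 1 + 2 * (L * n / eps)"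
    using assms by (simp_all add: x_def)
  then have "x \<ge> 2"
    by simp
  have "real (card (grid (eps / n) L)) + 2 \<le> 2 * (L / (eps / n)) + 7"
    using card_grid_le[of "eps / n" L] assms \<open>n > 0\<close> \<open>L > 0\<close> by simp
  also have "\<dots> \<le> 4 * x"
    using ratio by simp
  finally have "ln (real (card (grid (eps / n) L)) + 2) \<le> ln (4 * x)"
    using \<open>x \<ge> 2\<close> by simp
  also have "\<dots> = ln 4 + ln x"
    using \<open>x \<ge> 2\<close> by (simp add: ln_mult)
  also have "\<dots> \<le> ln (x\<^sup>2) + ln x"
    using \<open>x \<ge> 2\<close> power_mono[of 2 x 2] by simp
  also have "\<dots> = 3 * ln x"
    using \<open>x \<ge> 2\<close> by (simp add: ln_realpow)
  finally show ?thesis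
    by (simp add: x_def add.commute)
qed

lemma ln_covering_number_TV_class_le_large:
  fixes n :: nat and V L eps :: real
  assumes n: "n \<ge> 2" and pos: "V > 0" "eps > 0" and large: "eps < L * n"
  shows "ln (real (covering_number n n (TV_class n n V L) eps))
           \<le> 579 * ln (1 + 2 * L * n / eps) * max (V\<^sup>2 * ln n / eps\<^sup>2) 1"
proof -
  define D where "D = Suc (floor_log n)"
  \<comment> \<open>each of the two error terms of \<open>covering_number_TV_class_le\<close> becomes \<open>eps\<^sup>2 / 2\<close>\<close>
  define \<tau> where "\<tau> = eps\<^sup>2 / (12 * V)"
  define \<delta> where "\<delta> = eps / n"
  define E where "E = 4 * nat \<lfloor>D * V / \<tau>\<rfloor> + 1"
  define B where "B = card (grid \<delta> L) + 2"
  have D: "n < 2 ^ D" "2 ^ D \<le> 2 * n"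
    using floor_log_exp2_gt[of n] floor_log_exp2_le[of n] n by (simp_all add: D_def)
  have "6 * \<tau> * V = eps\<^sup>2 / 2" "\<delta>\<^sup>2 * (real n)\<^sup>2 = eps\<^sup>2"
    using pos n by (simp_all add: \<tau>_def \<delta>_def power_divide)
  then have "covering_number n n (TV_class n n V L) eps \<le> B ^ E"
    unfolding B_def E_def using pos n D(1)
    by (intro covering_number_TV_class_le) (auto simp: \<tau>_def \<delta>_def)
  then have "ln (real (covering_number n n (TV_class n n V L) eps)) \<le> E * ln B"
    using ln_of_nat_le_ln[of _ "B ^ E"] by (simp add: B_def ln_realpow)
  also have "\<dots> \<le> (193 * max (V\<^sup>2 * ln n / eps\<^sup>2) 1) * (3 * ln (1 + 2 * L * n / eps))"
    using code_length_le[OF n D(2) pos] ln_card_grid_le[OF pos(2) large]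
    by (intro mult_mono) (simp_all add: E_def B_def \<tau>_def \<delta>_def)
  finally show ?thesis
    by (simp add: mult_ac)
qed

lemma ln_covering_number_TV_class_le:
  fixes n :: nat and V L eps :: real
  assumes n: "n \<ge> 2" and pos: "V > 0" "L > 0" "eps > 0"
  shows "ln (real (covering_number n n (TV_class n n V L) eps))
           \<le> 1200 * ln n * ln (1 + 2 * L * n / eps) * max (V\<^sup>2 * ln n / eps\<^sup>2) 1"
proof -
  define N where "N = covering_number n n (TV_class n n V L) eps"
  define x where "x = 1 + 2 * L * n / eps"
  define M where "M = max (V\<^sup>2 * ln n / eps\<^sup>2) 1"
  have "0 \<le> ln x" "1 \<le> M"
    using n pos by (simp_all add: x_def M_def)
  have "ln (real N) \<le> 600 * ln x * M"
  proof (cases "L * n \<le> eps")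
    case True
    \<comment> \<open>the ball around \<open>0\<close> suffices; the quadtree count needs \<open>x \<ge> 2\<close>\<close>
    then have "N \<le> 1"
      unfolding N_def by (intro covering_number_TV_class_le_1) simp
    then have "ln (real N) \<le> 0"
      using ln_of_nat_le_ln[of N 1] by simp
    moreover have "0 \<le> 600 * ln x * M"
      using \<open>0 \<le> ln x\<close> \<open>1 \<le> M\<close> by simp
    ultimately show ?thesis
      by linarith
  next
    case False
    then have "ln (real N) \<le> 579 * ln x * M"
      using ln_covering_number_TV_class_le_large[OF n pos(1,3)] by (simp add: N_def x_def M_def)
    also have "\<dots> \<le> 600 * ln x * M"
      using \<open>0 \<le> ln x\<close> \<open>1 \<le> M\<close> by (intro mult_right_mono) auto
    finally show ?thesis .
  qed
  also have "\<dots> \<le> 1200 * ln n * ln x * M"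
  proof -
    have "ln 2 \<le> ln (real n)"
      using n by simp
    then have "600 \<le> 1200 * ln n"
      using ln_2_ge_half by linarith
    then show ?thesis
      using \<open>0 \<le> ln x\<close> \<open>1 \<le> M\<close> by (intro mult_right_mono) auto
  qed
  finally show ?thesis
    unfolding N_def x_def M_def .
qed

theorem proposition4p4:
  shows "\<exists>C>0. \<forall>(n::nat) (V::real) (L::real) (eps::real).
           n \<ge> 2 \<longrightarrow> V > 0 \<longrightarrow> L > 0 \<longrightarrow> eps > 0 \<longrightarrow>
           ln (real (covering_number n n (TV_class n n V L) eps))
             \<le> C * ln (real n) * ln (1 + 2 * L * real n / eps)
                 * max (V\<^sup>2 * ln (real n) / eps\<^sup>2) 1"
  by (intro exI[of _ 1200] conjI allI impI) (auto intro: ln_covering_number_TV_class_le)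

end
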